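(* Let $G$ be a fullerene graph and $S$ a perfect star packing of $G$. Then the number of connected components of $G-C(S)$ that are cycles of odd length is even.
   Context: A fullerene graph is a finite simple connected (equivalently, $3$-connected) plane cubic graph all of whose faces are pentagons or hexagons. A perfect star packing of $G$ is a spanning subgraph $S$ of $G$ every connected component of which is isomorphic to $K_{1,3}$; $C(S)$ denotes the set of centers (degree-$3$ vertices) of the stars in $S$. (Every connected component of $G-C(S)$ is a cycle.) *)

theory Defs
  imports Main
begin

definition simple_graph :: "'a set \<Rightarrow> ('a \<Rightarrow> 'a \<Rightarrow> bool) \<Rightarrow> bool" where
  "simple_graph V E \<longleftrightarrow> finite V \<and> (\<forall>u v. E u v \<longrightarrow> u \<in> V \<and> v \<in> V)
     \<and> (\<forall>u v. E u v \<longrightarrow> E v u) \<and> (\<forall>v. \<not> E v v)"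

definition nbrs :: "('a \<Rightarrow> 'a \<Rightarrow> bool) \<Rightarrow> 'a \<Rightarrow> 'a set" where
  "nbrs E v = {w. E v w}"

definition cubic :: "'a set \<Rightarrow> ('a \<Rightarrow> 'a \<Rightarrow> bool) \<Rightarrow> bool" where
  "cubic V E \<longleftrightarrow> (\<forall>v\<in>V. card (nbrs E v) = 3)"

definition connected_graph :: "'a set \<Rightarrow> ('a \<Rightarrow> 'a \<Rightarrow> bool) \<Rightarrow> bool" where
  "connected_graph V E \<longleftrightarrow> V \<noteq> {} \<and> (\<forall>u\<in>V. \<forall>v\<in>V. E\<^sup>*\<^sup>* u v)"

definition edges :: "('a \<Rightarrow> 'a \<Rightarrow> bool) \<Rightarrow> 'a set set" where
  "edges E = {{u, v} | u v. E u v}"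

(* Combinatorial embedding (rotation system): rot v is a cyclic permutation of the
   neighbours of v. *)
definition rotation_system :: "'a set \<Rightarrow> ('a \<Rightarrow> 'a \<Rightarrow> bool) \<Rightarrow> ('a \<Rightarrow> 'a \<Rightarrow> 'a) \<Rightarrow> bool" where
  "rotation_system V E rot \<longleftrightarrow>
     (\<forall>v\<in>V. \<forall>u. E v u \<longrightarrow> E v (rot v u)) \<and>
     (\<forall>v\<in>V. \<forall>u w. E v u \<and> E v w \<longrightarrow> (\<exists>n. (rot v ^^ n) u = w))"

definition darts :: "('a \<Rightarrow> 'a \<Rightarrow> bool) \<Rightarrow> ('a \<times> 'a) set" where
  "darts E = {(u, v). E u v}"

(* face-tracing permutation on darts *)
definition face_step :: "('a \<Rightarrow> 'a \<Rightarrow> 'a) \<Rightarrow> 'a \<times> 'a \<Rightarrow> 'a \<times> 'a" where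
  "face_step rot d = (snd d, rot (snd d) (fst d))"

definition face_of :: "('a \<Rightarrow> 'a \<Rightarrow> 'a) \<Rightarrow> 'a \<times> 'a \<Rightarrow> ('a \<times> 'a) set" where
  "face_of rot d = {(face_step rot ^^ n) d | n. True}"

definition faces :: "('a \<Rightarrow> 'a \<Rightarrow> bool) \<Rightarrow> ('a \<Rightarrow> 'a \<Rightarrow> 'a) \<Rightarrow> ('a \<times> 'a) set set" where
  "faces E rot = face_of rot ` darts E"

(* plane embedding of a connected graph: rotation system of genus 0 (Euler's formula) *)
definition plane_embedding :: "'a set \<Rightarrow> ('a \<Rightarrow> 'a \<Rightarrow> bool) \<Rightarrow> ('a \<Rightarrow> 'a \<Rightarrow> 'a) \<Rightarrow> bool" where
  "plane_embedding V E rot \<longleftrightarrow> rotation_system V E rot \<and>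
     int (card V) - int (card (edges E)) + int (card (faces E rot)) = 2"

(* a face is a pentagon/hexagon: its boundary walk has length 5 or 6 and visits
   distinct vertices (so it is a 5- or 6-cycle) *)
definition penta_hexa_face :: "('a \<times> 'a) set \<Rightarrow> bool" where
  "penta_hexa_face f \<longleftrightarrow> card f \<in> {5, 6} \<and> card (fst ` f) = card f"

definition fullerene :: "'a set \<Rightarrow> ('a \<Rightarrow> 'a \<Rightarrow> bool) \<Rightarrow> bool" where
  "fullerene V E \<longleftrightarrow> simple_graph V E \<and> connected_graph V E \<and> cubic V E \<and>
     (\<exists>rot. plane_embedding V E rot \<and> (\<forall>f\<in>faces E rot. penta_hexa_face f))"

definition restr :: "'a set \<Rightarrow> ('a \<Rightarrow> 'a \<Rightarrow> bool) \<Rightarrow> 'a \<Rightarrow> 'a \<Rightarrow> bool" where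
  "restr W R x y \<longleftrightarrow> x \<in> W \<and> y \<in> W \<and> R x y"

definition components :: "'a set \<Rightarrow> ('a \<Rightarrow> 'a \<Rightarrow> bool) \<Rightarrow> 'a set set" where
  "components W R = (\<lambda>v. {w \<in> W. (restr W R)\<^sup>*\<^sup>* v w}) ` W"

definition is_K13 :: "'a set \<Rightarrow> ('a \<Rightarrow> 'a \<Rightarrow> bool) \<Rightarrow> bool" where
  "is_K13 K S \<longleftrightarrow> card K = 4 \<and>
     (\<exists>c\<in>K. \<forall>x\<in>K. \<forall>y\<in>K. S x y \<longleftrightarrow> (x = c \<and> y \<noteq> c) \<or> (y = c \<and> x \<noteq> c))"

definition perfect_star_packing :: "'a set \<Rightarrow> ('a \<Rightarrow> 'a \<Rightarrow> bool) \<Rightarrow> ('a \<Rightarrow> 'a \<Rightarrow> bool) \<Rightarrow> bool" where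
  "perfect_star_packing V E S \<longleftrightarrow> (\<forall>u v. S u v \<longrightarrow> E u v) \<and> (\<forall>u v. S u v \<longrightarrow> S v u) \<and>
     (\<forall>K\<in>components V S. is_K13 K S)"

definition centers :: "'a set \<Rightarrow> ('a \<Rightarrow> 'a \<Rightarrow> bool) \<Rightarrow> 'a set" where
  "centers V S = {v \<in> V. card (nbrs S v) = 3}"

definition is_cycle_comp :: "'a set \<Rightarrow> ('a \<Rightarrow> 'a \<Rightarrow> bool) \<Rightarrow> bool" where
  "is_cycle_comp K R \<longleftrightarrow> card K \<ge> 3 \<and> (\<forall>v\<in>K. card (nbrs (restr K R) v) = 2)"

end

(* Every non-centre vertex has exactly one centre neighbour, so the components of G - C(S) are the
   cycles of the 2-regular graph X formed by the edges between non-centres, and the number of odd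
   ones has the parity of |V - C(S)|.

   X is an even subgraph, and in a plane graph every even subgraph is a sum of face boundaries (by
   Euler's formula the 2^(F-1) sums of face boundaries exhaust the cycle space). Hence there is a
   set T of faces such that an edge separates a face in T from a face outside T exactly when it
   lies in X. Each edge of X carries one dart lying on a face of T, every other edge none or two,
   so the number of darts on faces of T is congruent to |V - C(S)| modulo 2.

   Around a pentagon or hexagon f, centres are at distance at least 3, and a case check shows that
   |f| + s(f) + i(f) and i(f) are even, where s(f) counts the darts of X on f whose neighbours along
   f are in X and i(f) those whose neighbours along f are not. Reversing a dart of X exchanges the
   two kinds and moves it to the other side of T, so summing over the faces in T shows that the
   number of darts on faces of T is congruent to the total number of darts of the second kind,
   which is even. *)

theory Submission
  imports Defs "HOL-Combinatorics.Orbits" "HOL-Library.Disjoint_Sets" "HOL-Library.Z2"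
begin

section \<open>Parity of finite sets\<close>

lemma even_card_involution:
  assumes "\<And>x. x \<in> A \<Longrightarrow> g x \<in> A" "\<And>x. x \<in> A \<Longrightarrow> g (g x) = x"
    and "\<And>x. x \<in> A \<Longrightarrow> g x \<noteq> x"
  shows "even (card A)"
proof -
  have "(\<Sum>x\<in>A. 1 :: bit) = 0"
    by (rule sum_involution_eq_0[where h = g]) (use assms in auto)
  then show ?thesis
    by (simp flip: even_of_nat[where 'a = bit])
qed

lemma card_swap_eq:
  assumes "\<And>d. d \<in> A \<Longrightarrow> prod.swap d \<in> B" "\<And>d. d \<in> B \<Longrightarrow> prod.swap d \<in> A"
  shows "card A = card B"
  by (rule bij_betw_same_card[of prod.swap], rule bij_betwI[where g = prod.swap]) (use assms in auto)

lemma card_filter_split: "finite A \<Longrightarrow> card A = card {x \<in> A. P x} + card {x \<in> A. \<not> P x}"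
  by (subst card_Un_disjoint[symmetric]) (auto intro: arg_cong[where f = card])

lemma card_filter_lessThan: "card {i \<in> {..<n::nat}. P i} = (\<Sum>i<n. if P i then 1 else 0)"
  by (simp add: sum.If_cases Int_def)

text \<open>Here \<open>z\<close> marks the centres along the boundary walk of a face of length \<open>l\<close>. The first
  parity holds for every \<open>l\<close>; the second fails for \<open>l = 7\<close> with centres at \<open>0\<close> and \<open>3\<close>, and is
  where the pentagon/hexagon hypothesis enters.\<close>

lemma cyclic_pattern_parity:
  fixes z :: "nat \<Rightarrow> bool"
  assumes "l = 5 \<or> l = 6" and period: "\<And>i. z (i + l) = z i"
    and spaced: "\<And>i j. z i \<Longrightarrow> z j \<Longrightarrow> i < j \<Longrightarrow> j \<le> i + 2 \<Longrightarrow> False"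
  defines "R \<equiv> card {i \<in> {..<l}. \<not> z i \<and> \<not> z (i + 1) \<and> \<not> z (i + 2) \<and> \<not> z (i + 3)}"
    and "I \<equiv> card {i \<in> {..<l}. z i \<and> \<not> z (i + 1) \<and> \<not> z (i + 2) \<and> z (i + 3)}"
  shows "even (l + R + I) \<and> even I"
  using assms(1)
proof
  assume l: "l = 5"
  have sum5: "(\<Sum>i<5. g i) = g 0 + g 1 + g 2 + g 3 + g 4" for g :: "nat \<Rightarrow> nat"
    by (simp add: eval_nat_numeral)
  define a b c d e where "a = z 0" "b = z 1" "c = z 2" "d = z 3" "e = z 4"
  have zs: "z 0 = a" "z 1 = b" "z 2 = c" "z 3 = d" "z 4 = e" "z 5 = a" "z 6 = b" "z 7 = c"
    using period[of 0] period[of 1] period[of 2] by (simp_all add: l a_b_c_d_e_def)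
  have "\<not> (a \<and> b)" "\<not> (b \<and> c)" "\<not> (c \<and> d)" "\<not> (d \<and> e)" "\<not> (e \<and> a)"
    "\<not> (a \<and> c)" "\<not> (b \<and> d)" "\<not> (c \<and> e)" "\<not> (d \<and> a)" "\<not> (e \<and> b)"
    using spaced[of 0 1] spaced[of 1 2] spaced[of 2 3] spaced[of 3 4] spaced[of 4 5]
      spaced[of 0 2] spaced[of 1 3] spaced[of 2 4] spaced[of 3 5] spaced[of 4 6]
    by (auto simp: zs simp flip: One_nat_def)
  then show ?thesis
    unfolding R_def I_def l card_filter_lessThan sum5
    by (simp only: zs arith_simps one_add_one numeral_plus_one one_plus_numeral,
        cases a; cases b; cases c; cases d; cases e; simp)
next
  assume l: "l = 6"
  have sum6: "(\<Sum>i<6. g i) = g 0 + g 1 + g 2 + g 3 + g 4 + g 5" for g :: "nat \<Rightarrow> nat"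
    by (simp add: eval_nat_numeral)
  define a b c d e f where "a = z 0" "b = z 1" "c = z 2" "d = z 3" "e = z 4" "f = z 5"
  have zs: "z 0 = a" "z 1 = b" "z 2 = c" "z 3 = d" "z 4 = e" "z 5 = f" "z 6 = a" "z 7 = b"
    "z 8 = c"
    using period[of 0] period[of 1] period[of 2] by (simp_all add: l a_b_c_d_e_f_def)
  have "\<not> (a \<and> b)" "\<not> (b \<and> c)" "\<not> (c \<and> d)" "\<not> (d \<and> e)" "\<not> (e \<and> f)" "\<not> (f \<and> a)"
    "\<not> (a \<and> c)" "\<not> (b \<and> d)" "\<not> (c \<and> e)" "\<not> (d \<and> f)" "\<not> (e \<and> a)" "\<not> (f \<and> b)"
    using spaced[of 0 1] spaced[of 1 2] spaced[of 2 3] spaced[of 3 4] spaced[of 4 5] spaced[of 5 6]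
      spaced[of 0 2] spaced[of 1 3] spaced[of 2 4] spaced[of 3 5] spaced[of 4 6] spaced[of 5 7]
    by (auto simp: zs simp flip: One_nat_def)
  then show ?thesis
    unfolding R_def I_def l card_filter_lessThan sum6
    by (simp only: zs arith_simps one_add_one numeral_plus_one one_plus_numeral,
        cases a; cases b; cases c; cases d; cases e; cases f; simp)
qed

section \<open>Connected components\<close>

definition reachable_in :: "'a set \<Rightarrow> ('a \<Rightarrow> 'a \<Rightarrow> bool) \<Rightarrow> ('a \<times> 'a) set" where
  "reachable_in W R = {(v, w). v \<in> W \<and> w \<in> W \<and> (restr W R)\<^sup>*\<^sup>* v w}"

lemma components_eq_quotient: "components W R = W // reachable_in W R"
  by (auto simp: components_def quotient_def reachable_in_def)

lemma equiv_reachable_in: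
  assumes "symp R" shows "equiv W (reachable_in W R)"
proof -
  have "symp (restr W R)"
    using assms by (auto simp: symp_def restr_def)
  then have "symp (restr W R)\<^sup>*\<^sup>*"
    by (rule symp_rtranclp)
  then show ?thesis
    by (auto simp: equiv_def refl_on_def sym_def trans_def reachable_in_def
        dest: sympD intro: rtranclp_trans)
qed

lemma sum_card_components:
  assumes "finite W" "symp R" shows "sum card (components W R) = card W"
proof -
  have eq: "equiv W (reachable_in W R)"
    using assms(2) by (rule equiv_reachable_in)
  have "card W = card (\<Union> (W // reachable_in W R))"
    using eq by (simp add: Union_quotient)
  also have "\<dots> = sum card (W // reachable_in W R)"
    using assms(1) eq
    by (intro card_Union_disjoint)
      (auto simp: pairwise_def disjnt_def dest: quotient_disj in_quotient_imp_subset
        intro: finite_subset)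
  finally show ?thesis
    by (simp add: components_eq_quotient)
qed

lemma even_card_odd_components:
  assumes "finite W" "symp R" "even (card W)"
  shows "even (card {K \<in> components W R. odd (card K)})"
proof -
  have "finite (components W R)"
    using assms(1) by (simp add: components_def)
  then show ?thesis
    using assms by (simp flip: even_sum_iff add: sum_card_components)
qed

lemma nbrs_restr_component:
  assumes "symp R" "K \<in> components W R" "v \<in> K"
  shows "nbrs (restr K R) v = nbrs R v \<inter> W"
proof -
  have eq: "equiv W (reachable_in W R)"
    using assms(1) by (rule equiv_reachable_in)
  have K: "K \<in> W // reachable_in W R"
    using assms(2) by (simp add: components_eq_quotient)
  have "K \<subseteq> W"
    using in_quotient_imp_subset[OF eq K] .
  moreover have "w \<in> K" if "R v w" "w \<in> W" for w
  proof (rule in_quotient_imp_closed[OF eq K assms(3)])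
    have "restr W R v w"
      using that assms(3) \<open>K \<subseteq> W\<close> by (auto simp: restr_def)
    then show "(v, w) \<in> reachable_in W R"
      using that assms(3) \<open>K \<subseteq> W\<close> by (auto simp: reachable_in_def)
  qed
  ultimately show ?thesis
    using assms(3) by (auto simp: nbrs_def restr_def)
qed

section \<open>Simple graphs and their even edge sets\<close>

definition odd_vertices :: "'a set set \<Rightarrow> 'a set" where
  "odd_vertices A = {v. odd (card {e \<in> A. v \<in> e})}"

lemma card_sym_diff:
  assumes "finite A" "finite B"
  shows "card (sym_diff A B) + 2 * card (A \<inter> B) = card A + card B"
proof -
  have "A \<union> B = sym_diff A B \<union> (A \<inter> B)" "sym_diff A B \<inter> (A \<inter> B) = {}"
    by blast+
  then have "card (A \<union> B) = card (sym_diff A B) + card (A \<inter> B)"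
    using assms by (simp add: card_Un_disjoint)
  then show ?thesis
    using card_Un_Int[OF assms] by simp
qed

lemma odd_vertices_sym_diff:
  assumes "finite A" "finite B"
  shows "odd_vertices (sym_diff A B) = sym_diff (odd_vertices A) (odd_vertices B)"
proof -
  have "odd (card {e \<in> sym_diff A B. v \<in> e})
      \<longleftrightarrow> odd (card {e \<in> A. v \<in> e}) \<noteq> odd (card {e \<in> B. v \<in> e})" for v
  proof -
    have "{e \<in> sym_diff A B. v \<in> e} = sym_diff {e \<in> A. v \<in> e} {e \<in> B. v \<in> e}"
      by blast
    then show ?thesis
      using card_sym_diff[of "{e \<in> A. v \<in> e}" "{e \<in> B. v \<in> e}"] assms
      by simp presburger
  qed
  then show ?thesis
    by (auto simp: odd_vertices_def)
qed

lemma odd_vertices_edge: "odd_vertices {{u, v}} = {u, v}"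
proof -
  have "{e \<in> {{u, v}}. x \<in> e} = (if x \<in> {u, v} then {{u, v}} else {})" for x
    by auto
  then show ?thesis
    by (auto simp: odd_vertices_def)
qed

lemma odd_vertices_empty: "odd_vertices {} = {}"
  by (simp add: odd_vertices_def)

locale sgraph =
  fixes V :: "'a set" and E :: "'a \<Rightarrow> 'a \<Rightarrow> bool"
  assumes simple: "simple_graph V E"
begin

lemma finite_V: "finite V"
  using simple by (simp add: simple_graph_def)

lemma edge_in_V: "E u v \<Longrightarrow> u \<in> V" "E u v \<Longrightarrow> v \<in> V"
  using simple by (simp_all add: simple_graph_def)

lemma edge_sym: "E u v \<Longrightarrow> E v u"
  using simple by (simp add: simple_graph_def)

lemma symp_E: "symp E"
  using edge_sym by (auto simp: symp_def)

lemma no_loop: "\<not> E v v"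
  using simple by (simp add: simple_graph_def)

lemma finite_nbrs: "finite (nbrs E v)"
  by (rule finite_subset[OF _ finite_V]) (auto simp: nbrs_def edge_in_V)

lemma finite_edges: "finite (edges E)"
  by (rule finite_subset[of _ "Pow V"]) (auto simp: edges_def edge_in_V finite_V)

lemma edge_in_edges: "E u v \<Longrightarrow> {u, v} \<in> edges E"
  by (auto simp: edges_def)

lemma dart_iff: "(u, v) \<in> darts E \<longleftrightarrow> E u v"
  by (simp add: darts_def)

lemma finite_darts: "finite (darts E)"
  by (rule finite_subset[of _ "V \<times> V"]) (auto simp: darts_def edge_in_V finite_V)

lemma swap_dart: "d \<in> darts E \<Longrightarrow> prod.swap d \<in> darts E"
  by (cases d) (simp add: dart_iff edge_sym)

end

locale cubic_sgraph = sgraph +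
  assumes cubic: "cubic V E"
begin

lemma card_nbrs: "v \<in> V \<Longrightarrow> card (nbrs E v) = 3"
  using cubic by (simp add: cubic_def)

lemma ex_nbr:
  assumes "v \<in> V" shows "\<exists>x. E v x"
proof -
  have "nbrs E v \<noteq> {}"
    using card_nbrs[OF assms] by auto
  then show ?thesis
    by (auto simp: nbrs_def)
qed

end

locale connected_sgraph = sgraph +
  assumes connected: "connected_graph V E"
begin

lemma path_odd_vertices:
  assumes "E\<^sup>*\<^sup>* u w" shows "\<exists>P \<subseteq> edges E. odd_vertices P = sym_diff {u} {w}"
  using assms
proof (induction rule: rtranclp_induct)
  case base
  show ?case
    by (intro exI[of _ "{}"]) (simp add: odd_vertices_empty)
next
  case (step y z)
  then obtain P where P: "P \<subseteq> edges E" "odd_vertices P = sym_diff {u} {y}"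
    by blast
  have "finite P"
    using P(1) finite_edges by (rule finite_subset)
  then have "odd_vertices (sym_diff P {{y, z}}) = sym_diff (sym_diff {u} {y}) {y, z}"
    by (simp add: odd_vertices_sym_diff P(2) odd_vertices_edge)
  also have "\<dots> = sym_diff {u} {z}"
    using no_loop[of y] step(2) by auto
  finally show ?case
    using P(1) edge_in_edges[OF step(2)] by (intro exI[of _ "sym_diff P {{y, z}}"]) auto
qed

lemma edge_set_with_odd_vertices:
  assumes "v0 \<in> V" "Y \<subseteq> V"
  shows "\<exists>P \<subseteq> edges E. odd_vertices P - {v0} = Y - {v0}"
proof -
  have "finite Y"
    using assms(2) finite_V by (rule finite_subset)
  then show ?thesis
    using assms(2)
  proof (induction Y rule: finite_induct)
    case empty
    show ?case
      by (intro exI[of _ "{}"]) (simp add: odd_vertices_empty)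
  next
    case (insert y Y)
    then obtain P where P: "P \<subseteq> edges E" "odd_vertices P - {v0} = Y - {v0}"
      by blast
    have "E\<^sup>*\<^sup>* v0 y"
      using connected assms(1) insert.prems unfolding connected_graph_def by blast
    from path_odd_vertices[OF this] obtain Q where Q: "Q \<subseteq> edges E" "odd_vertices Q = sym_diff {v0} {y}"
      by blast
    have "finite P" "finite Q"
      using P(1) Q(1) finite_edges by (auto intro: finite_subset)
    then have "odd_vertices (sym_diff P Q) - {v0} = insert y Y - {v0}"
      using P(2) Q(2) insert.hyps(2) by (auto simp: odd_vertices_sym_diff)
    then show ?case
      using P(1) Q(1) by (intro exI[of _ "sym_diff P Q"]) auto
  qed
qed

text \<open>That is, the cycle space has dimension at most \<open>|E| - |V| + 1\<close>.\<close>

lemma card_even_edge_sets: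
  "card {A. A \<subseteq> edges E \<and> odd_vertices A = {}} * 2 ^ (card V - 1) \<le> 2 ^ card (edges E)"
proof -
  let ?Z = "{A. A \<subseteq> edges E \<and> odd_vertices A = {}}"
  obtain v0 where v0: "v0 \<in> V"
    using connected by (auto simp: connected_graph_def)
  define join where "join Y = (SOME P. P \<subseteq> edges E \<and> odd_vertices P - {v0} = Y - {v0})" for Y
  have join: "join Y \<subseteq> edges E" "odd_vertices (join Y) - {v0} = Y - {v0}" if "Y \<subseteq> V" for Y
    using someI_ex[OF edge_set_with_odd_vertices[OF v0 that]] by (simp_all add: join_def)
  have finite_edge_set: "finite A" if "A \<subseteq> edges E" for A
    using that finite_edges by (rule finite_subset)
  define g where "g = (\<lambda>(A, Y). sym_diff A (join Y))"
  have odd_g: "odd_vertices (g (A, Y)) - {v0} = Y" if "A \<in> ?Z" "Y \<subseteq> V - {v0}" for A Y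
  proof -
    have "finite A" "finite (join Y)"
      using that join(1)[of Y] finite_edge_set by auto
    then have "odd_vertices (g (A, Y)) = odd_vertices (join Y)"
      using that(1) by (simp add: g_def odd_vertices_sym_diff)
    then show ?thesis
      using join(2)[of Y] that(2) by auto
  qed
  have "inj_on g (?Z \<times> Pow (V - {v0}))"
  proof (rule inj_onI)
    fix p q assume p: "p \<in> ?Z \<times> Pow (V - {v0})" and q: "q \<in> ?Z \<times> Pow (V - {v0})"
      and eq: "g p = g q"
    obtain A Y A' Y' where pq: "p = (A, Y)" "q = (A', Y')"
      by fastforce
    have "Y = Y'"
      using odd_g[of A Y] odd_g[of A' Y'] p q eq by (simp add: pq)
    moreover have "A = sym_diff (g (A, Y)) (join Y)" "A' = sym_diff (g (A', Y')) (join Y')"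
      by (auto simp: g_def)
    ultimately show "p = q"
      using eq by (simp add: pq)
  qed
  moreover have "g ` (?Z \<times> Pow (V - {v0})) \<subseteq> Pow (edges E)"
    using join by (auto simp: g_def)
  ultimately have "card (?Z \<times> Pow (V - {v0})) \<le> card (Pow (edges E))"
    using finite_edges by (intro card_inj_on_le) auto
  then show ?thesis
    using v0 finite_V finite_edges by (simp add: card_cartesian_product card_Pow)
qed

end

section \<open>Faces of plane cubic graphs\<close>

locale plane_cubic_graph = connected_sgraph + cubic_sgraph +
  fixes rot :: "'a \<Rightarrow> 'a \<Rightarrow> 'a"
  assumes plane: "plane_embedding V E rot"
begin

lemma euler: "int (card V) - int (card (edges E)) + int (card (faces E rot)) = 2"
  using plane by (simp add: plane_embedding_def)

lemma rot_edge: "v \<in> V \<Longrightarrow> E v u \<Longrightarrow> E v (rot v u)"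
  using plane by (simp add: plane_embedding_def rotation_system_def)

lemma nbrs_subset_if_rot_closed:
  assumes "v \<in> V" "E v u" "u \<in> X" "\<And>y. y \<in> X \<Longrightarrow> rot v y \<in> X"
  shows "nbrs E v \<subseteq> X"
proof
  fix w assume "w \<in> nbrs E v"
  then have "E v w"
    by (simp add: nbrs_def)
  then obtain n where "(rot v ^^ n) u = w"
    using plane assms(1,2) unfolding plane_embedding_def rotation_system_def by blast
  moreover have "(rot v ^^ n) u \<in> X"
    using assms(3,4) by (induction n) auto
  ultimately show "w \<in> X" by simp
qed

lemma rot_three_cycle:
  assumes v: "v \<in> V" and x: "E v x"
  shows "nbrs E v = {x, rot v x, rot v (rot v x)}" "distinct [x, rot v x, rot v (rot v x)]"
    "rot v (rot v (rot v x)) = x"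
proof -
  define y z where "y = rot v x" and "z = rot v y"
  have "E v y" "E v z" "E v (rot v z)"
    using x by (simp_all add: y_def z_def rot_edge[OF v])
  have no_small_closed: False
    if "u \<in> X" "E v u" "\<And>w. w \<in> X \<Longrightarrow> rot v w \<in> X" "card X \<le> 2" "finite X" for u X
    using card_mono[OF \<open>finite X\<close> nbrs_subset_if_rot_closed[OF v that(2,1,3)]]
      card_nbrs[OF v] \<open>card X \<le> 2\<close> by simp
  have "y \<noteq> x"
    using no_small_closed[of x "{x}"] x by (auto simp: y_def)
  moreover have "z \<noteq> y"
    using no_small_closed[of y "{y}"] \<open>E v y\<close> by (auto simp: z_def)
  moreover have "z \<noteq> x"
    using no_small_closed[of x "{x, y}"] x by (auto simp: y_def z_def card_insert_le_m1)
  ultimately have N: "nbrs E v = {x, y, z}"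
    using card_subset_eq[OF finite_nbrs, of "{x, y, z}"] card_nbrs[OF v] x \<open>E v y\<close> \<open>E v z\<close>
    by (simp add: nbrs_def)
  have "rot v z \<noteq> z"
    using no_small_closed[of z "{z}"] \<open>E v z\<close> by auto
  moreover have "rot v z \<noteq> y"
    using no_small_closed[of y "{y, z}"] \<open>E v y\<close> by (auto simp: z_def card_insert_le_m1)
  ultimately have "rot v z = x"
    using N \<open>E v (rot v z)\<close> by (auto simp: nbrs_def)
  then show "nbrs E v = {x, rot v x, rot v (rot v x)}" "distinct [x, rot v x, rot v (rot v x)]"
    "rot v (rot v (rot v x)) = x"
    using N \<open>y \<noteq> x\<close> \<open>z \<noteq> y\<close> \<open>z \<noteq> x\<close> by (auto simp: y_def z_def)
qed

lemma nbr_eq_rot_iterate: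
  assumes "v \<in> V" "E v x" "E v w"
  shows "w = x \<or> w = rot v x \<or> w = rot v (rot v x)"
proof -
  have "w \<in> nbrs E v"
    using assms(3) by (simp add: nbrs_def)
  then show ?thesis
    unfolding rot_three_cycle(1)[OF assms(1,2)] by blast
qed

lemma rot_inj:
  assumes "v \<in> V" "E v a" "E v b" "rot v a = rot v b" shows "a = b"
  using nbr_eq_rot_iterate[OF assms(1-3)] rot_three_cycle(2,3)[OF assms(1,2)] assms(4) by auto

lemma face_step_dart: "d \<in> darts E \<Longrightarrow> face_step rot d \<in> darts E"
  by (cases d) (auto simp: face_step_def dart_iff intro: rot_edge edge_in_V edge_sym)

lemma inj_on_face_step: "inj_on (face_step rot) (darts E)"
proof (rule inj_onI)
  fix d d' assume "d \<in> darts E" "d' \<in> darts E" "face_step rot d = face_step rot d'"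
  then show "d = d'"
    using rot_inj[of "snd d" "fst d" "fst d'"] edge_in_V edge_sym
    by (cases d, cases d') (auto simp: face_step_def dart_iff)
qed

lemma face_of_eq_orbit:
  assumes "d \<in> darts E"
  shows "d \<in> orbit (face_step rot) d" "face_of rot d = orbit (face_step rot) d"
proof -
  let ?g = "perm_restrict (face_step rot) (darts E)"
  have "face_step rot ` darts E = darts E"
    by (intro endo_inj_surj finite_darts inj_on_face_step) (auto simp: face_step_dart)
  then have "bij_betw ?g (darts E) (darts E)"
    using inj_on_face_step
    by (simp add: bij_betw_def perm_restrict_simps cong: image_cong inj_on_cong)
  then have "?g permutes darts E"
    by (rule bij_imp_permutes) (simp add: perm_restrict_simps)
  then have "permutation ?g"
    using finite_darts by (auto simp: permutation_permutes)
  moreover have "orbit ?g d = orbit (face_step rot) d"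
    using assms by (intro orbit_cong0) (auto simp: perm_restrict_simps face_step_dart)
  ultimately show "d \<in> orbit (face_step rot) d"
    using permutation_self_in_orbit by metis
  then show "face_of rot d = orbit (face_step rot) d"
    unfolding face_of_def by (subst orbit_altdef_self_in) simp_all
qed

lemma funpow_face_step_dart: "d \<in> darts E \<Longrightarrow> (face_step rot ^^ n) d \<in> darts E"
  by (induction n) (simp_all add: face_step_dart)

lemma funpow_in_face_of: "(face_step rot ^^ n) d \<in> face_of rot d"
  by (auto simp: face_of_def)

lemma face_of_subset_darts: "d \<in> darts E \<Longrightarrow> face_of rot d \<subseteq> darts E"
  by (auto simp: face_of_def funpow_face_step_dart)

lemma face_of_eqI:
  assumes "d \<in> darts E" "d' \<in> face_of rot d" shows "face_of rot d' = face_of rot d"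
proof -
  note orb = face_of_eq_orbit[OF assms(1)]
  have "cyclic_on (face_step rot) (face_of rot d)"
    using orb by (intro cyclic_on_singleI) simp_all
  then have "orbit (face_step rot) d' = face_of rot d"
    using assms(2) by (rule orbit_cyclic_eq3)
  moreover have "d' \<in> darts E"
    using assms face_of_subset_darts by blast
  ultimately show ?thesis
    by (simp add: face_of_eq_orbit(2))
qed

lemma face_of_face_step: "d \<in> darts E \<Longrightarrow> face_of rot (face_step rot d) = face_of rot d"
  using face_of_eqI funpow_in_face_of[of 1 d] by simp

lemma face_walk:
  assumes "d \<in> darts E"
  defines "l \<equiv> card (face_of rot d)"
  shows "face_of rot d = (\<lambda>i. (face_step rot ^^ i) d) ` {..<l}"
    "inj_on (\<lambda>i. (face_step rot ^^ i) d) {..<l}" "(face_step rot ^^ l) d = d"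
proof -
  note orb = face_of_eq_orbit[OF assms(1)]
  let ?p = "funpow_dist1 (face_step rot) d d"
  have inj: "inj_on (\<lambda>i. (face_step rot ^^ i) d) {..<?p}"
    using inj_on_funpow_dist1[OF orb(1)] by (simp add: atLeast0LessThan)
  moreover have img: "face_of rot d = (\<lambda>i. (face_step rot ^^ i) d) ` {..<?p}"
    using orbit_conv_funpow_dist1[OF orb(1)] orb(2) by (simp add: atLeast0LessThan)
  ultimately have "l = ?p"
    by (simp add: l_def card_image)
  then show "face_of rot d = (\<lambda>i. (face_step rot ^^ i) d) ` {..<l}"
    "inj_on (\<lambda>i. (face_step rot ^^ i) d) {..<l}" "(face_step rot ^^ l) d = d"
    using inj img funpow_dist1_prop[OF orb(1)] by simp_all
qed

definition darts_on :: "('a \<times> 'a) set set \<Rightarrow> ('a \<times> 'a) set" where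
  "darts_on T = {d \<in> darts E. face_of rot d \<in> T}"

lemma darts_on_subset: "darts_on T \<subseteq> darts E"
  by (auto simp: darts_on_def)

lemma finite_darts_on: "finite (darts_on T)"
  using darts_on_subset finite_darts by (rule finite_subset)

lemma darts_on_faces: "darts_on (faces E rot) = darts E"
  by (auto simp: darts_on_def faces_def)

lemma darts_on_Int_faces: "darts_on (T \<inter> faces E rot) = darts_on T"
  by (auto simp: darts_on_def faces_def)

lemma card_darts_on_split:
  "card {d \<in> darts E. P d} = card {d \<in> darts_on T. P d} + card {d \<in> darts E - darts_on T. P d}"
proof -
  have "{d \<in> {d \<in> darts E. P d}. d \<in> darts_on T} = {d \<in> darts_on T. P d}"
    "{d \<in> {d \<in> darts E. P d}. d \<notin> darts_on T} = {d \<in> darts E - darts_on T. P d}"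
    using darts_on_subset by auto
  then show ?thesis
    using card_filter_split[of "{d \<in> darts E. P d}" "\<lambda>d. d \<in> darts_on T"] finite_darts by simp
qed

lemma card_darts_in_faces:
  assumes "Q \<subseteq> faces E rot"
  shows "card {d \<in> darts_on Q. P d} = (\<Sum>f\<in>Q. card {d \<in> f. P d})"
proof -
  have face_darts: "f \<subseteq> darts E" "\<And>d. d \<in> f \<Longrightarrow> face_of rot d = f" if f: "f \<in> Q" for f
  proof -
    obtain d0 where d0: "d0 \<in> darts E" and f_eq: "f = face_of rot d0"
      using f assms unfolding faces_def by blast
    show "f \<subseteq> darts E"
      unfolding f_eq using d0 by (rule face_of_subset_darts)
    show "face_of rot d = f" if "d \<in> f" for d
      using face_of_eqI[OF d0, of d] that f_eq by blast
  qed
  have "{d \<in> darts_on Q. P d} = (\<Union>f\<in>Q. {d \<in> f. P d})"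
  proof (intro equalityI subsetI)
    fix d assume "d \<in> {d \<in> darts_on Q. P d}"
    then show "d \<in> (\<Union>f\<in>Q. {d \<in> f. P d})"
      using funpow_in_face_of[of 0 d] by (auto simp: darts_on_def)
  next
    fix d assume "d \<in> (\<Union>f\<in>Q. {d \<in> f. P d})"
    then obtain f where "f \<in> Q" "d \<in> f" "P d"
      by blast
    then show "d \<in> {d \<in> darts_on Q. P d}"
      using face_darts[OF \<open>f \<in> Q\<close>] by (auto simp: darts_on_def)
  qed
  moreover have "finite Q"
    using assms finite_darts unfolding faces_def by (meson finite_imageI finite_subset)
  moreover have "finite {d \<in> f. P d}" if "f \<in> Q" for f
    by (rule finite_subset[OF _ finite_darts]) (use face_darts(1)[OF that] in blast)
  moreover have "{d \<in> f. P d} \<inter> {d \<in> g. P d} = {}" if "f \<in> Q" "g \<in> Q" "f \<noteq> g" for f g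
    using face_darts(2) that by blast
  ultimately show ?thesis
    by (simp add: card_UN_disjoint)
qed

lemma face_walk_shifted:
  assumes "d \<in> darts E"
  defines "l \<equiv> card (face_of rot d)"
  shows "face_of rot d = (\<lambda>i. (face_step rot ^^ (k + i)) d) ` {..<l}"
    "inj_on (\<lambda>i. (face_step rot ^^ (k + i)) d) {..<l}"
proof -
  let ?dk = "(face_step rot ^^ k) d"
  have same_face: "face_of rot ?dk = face_of rot d"
    using assms(1) funpow_in_face_of by (rule face_of_eqI)
  have "?dk \<in> darts E"
    using assms(1) by (rule funpow_face_step_dart)
  have "(face_step rot ^^ i) ?dk = (face_step rot ^^ (k + i)) d" for i
    by (simp add: funpow_add add.commute)
  then show "face_of rot d = (\<lambda>i. (face_step rot ^^ (k + i)) d) ` {..<l}"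
    "inj_on (\<lambda>i. (face_step rot ^^ (k + i)) d) {..<l}"
    using face_walk(1,2)[OF \<open>?dk \<in> darts E\<close>] by (simp_all add: same_face l_def)
qed

lemma card_face_filter:
  assumes "d \<in> darts E"
  shows "card {d' \<in> face_of rot d. P d'}
    = card {i \<in> {..<card (face_of rot d)}. P ((face_step rot ^^ Suc i) d)}"
proof -
  define l where "l = card (face_of rot d)"
  let ?w = "\<lambda>i. (face_step rot ^^ (1 + i)) d"
  have "{d' \<in> face_of rot d. P d'} = ?w ` {i \<in> {..<l}. P (?w i)}"
    using face_walk_shifted(1)[OF assms, of 1] by (auto simp flip: l_def)
  moreover have "inj_on ?w {i \<in> {..<l}. P (?w i)}"
    using face_walk_shifted(2)[OF assms, of 1] by (rule inj_on_subset) (auto simp: l_def)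
  ultimately show ?thesis
    by (simp add: card_image l_def)
qed

definition face_vertex :: "'a \<times> 'a \<Rightarrow> nat \<Rightarrow> 'a" where
  "face_vertex d i = fst ((face_step rot ^^ i) d)"

lemma face_walk_dart: "(face_step rot ^^ i) d = (face_vertex d i, face_vertex d (Suc i))"
  by (simp add: face_vertex_def face_step_def)

lemma face_vertex_rot: "rot (face_vertex d (Suc i)) (face_vertex d i) = face_vertex d (Suc (Suc i))"
  using face_walk_dart[of "Suc i" d] by (simp add: face_step_def face_walk_dart[of i d])

lemma face_vertex_edge:
  assumes "d \<in> darts E" shows "E (face_vertex d i) (face_vertex d (Suc i))"
proof -
  have "(face_step rot ^^ i) d \<in> darts E"
    using assms by (rule funpow_face_step_dart)
  then show ?thesis
    by (simp add: face_walk_dart dart_iff)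
qed

lemma face_vertex_period:
  assumes "d \<in> darts E"
  shows "face_vertex d (i + card (face_of rot d)) = face_vertex d i"
  using face_walk(3)[OF assms] by (simp add: face_vertex_def funpow_add)

subsection \<open>Even edge sets are sums of face boundaries\<close>

lemma face_of_reverse:
  assumes "E u v" shows "face_of rot (u, v) = face_of rot (v, rot v u)"
proof -
  have "(u, v) \<in> darts E"
    using assms by (simp add: dart_iff)
  from face_of_face_step[OF this] show ?thesis
    by (simp add: face_step_def)
qed

definition face_boundary :: "('a \<times> 'a) set set \<Rightarrow> 'a set set" where
  "face_boundary T =
     {{u, v} | u v. E u v \<and> (face_of rot (u, v) \<in> T \<longleftrightarrow> face_of rot (v, u) \<notin> T)}"

lemma face_boundary_iff:
  assumes "E u v"
  shows "{u, v} \<in> face_boundary T \<longleftrightarrow> (face_of rot (u, v) \<in> T \<longleftrightarrow> face_of rot (v, u) \<notin> T)"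
  using assms by (auto simp: face_boundary_def doubleton_eq_iff)

lemma face_boundary_subset_edges: "face_boundary T \<subseteq> edges E"
  by (auto simp: face_boundary_def edges_def)

lemma edges_at_vertex:
  assumes "v \<in> V" "E v x"
  shows "{e \<in> edges E. v \<in> e} = {{v, x}, {v, rot v x}, {v, rot v (rot v x)}}"
proof -
  have "{e \<in> edges E. v \<in> e} = (\<lambda>w. {v, w}) ` nbrs E v"
  proof (intro equalityI subsetI)
    fix e assume "e \<in> {e \<in> edges E. v \<in> e}"
    then obtain a b where "e = {a, b}" "E a b" "v \<in> {a, b}"
      by (auto simp: edges_def)
    then show "e \<in> (\<lambda>w. {v, w}) ` nbrs E v"
      using edge_sym[of a b] by (auto simp: nbrs_def insert_commute)
  qed (auto simp: edges_def nbrs_def)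
  then show ?thesis
    using rot_three_cycle(1)[OF assms] by simp
qed

lemma odd_vertices_face_boundary: "odd_vertices (face_boundary T) = {}"
proof -
  have "even (card {e \<in> face_boundary T. v \<in> e})" for v
  proof (cases "v \<in> V")
    case v: True
    obtain x where x: "E v x"
      using ex_nbr[OF v] by blast
    define y z where "y = rot v x" and "z = rot v y"
    have "E v y" "E v z" "rot v z = x" "distinct [x, y, z]"
      using rot_three_cycle[OF v x] x by (auto simp: y_def z_def nbrs_def)
    let ?a = "face_of rot (v, x) \<in> T" and ?b = "face_of rot (v, y) \<in> T"
      and ?c = "face_of rot (v, z) \<in> T"
    have "face_of rot (x, v) = face_of rot (v, y)" "face_of rot (y, v) = face_of rot (v, z)"
      "face_of rot (z, v) = face_of rot (v, x)"
      using face_of_reverse[OF edge_sym[OF x]] face_of_reverse[OF edge_sym[OF \<open>E v y\<close>]]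
        face_of_reverse[OF edge_sym[OF \<open>E v z\<close>]] \<open>rot v z = x\<close>
      by (simp_all add: y_def z_def)
    then have boundary: "{v, x} \<in> face_boundary T \<longleftrightarrow> ?a \<noteq> ?b" "{v, y} \<in> face_boundary T \<longleftrightarrow> ?b \<noteq> ?c"
      "{v, z} \<in> face_boundary T \<longleftrightarrow> ?c \<noteq> ?a"
      using face_boundary_iff[OF x] face_boundary_iff[OF \<open>E v y\<close>] face_boundary_iff[OF \<open>E v z\<close>]
      by simp_all
    have at_v: "{e \<in> face_boundary T. v \<in> e} = {{v, x}, {v, y}, {v, z}} \<inter> face_boundary T"
      using edges_at_vertex[OF v x] face_boundary_subset_edges unfolding y_def z_def by blast
    have "{v, x} \<noteq> {v, y}" "{v, x} \<noteq> {v, z}" "{v, y} \<noteq> {v, z}"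
      using \<open>distinct [x, y, z]\<close> by (simp_all add: doubleton_eq_iff)
    then show ?thesis
      unfolding at_v using boundary by (cases ?a; cases ?b; cases ?c) simp_all
  next
    case False
    then have "{e \<in> face_boundary T. v \<in> e} = {}"
      using face_boundary_subset_edges edge_in_V by (fastforce simp: edges_def)
    then show ?thesis
      by (simp only: card.empty even_zero)
  qed
  then show ?thesis
    by (simp add: odd_vertices_def)
qed

lemma face_boundary_inj_on:
  assumes f0: "f0 \<in> faces E rot"
  shows "inj_on face_boundary (Pow (faces E rot - {f0}))"
proof (rule inj_onI, rule ccontr)
  fix T T' assume T: "T \<in> Pow (faces E rot - {f0})" and T': "T' \<in> Pow (faces E rot - {f0})"
    and eq: "face_boundary T = face_boundary T'" and "T \<noteq> T'"
  define U where "U = sym_diff T T'"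
  \<comment> \<open>\<open>U\<close> has no boundary, so membership in \<open>U\<close> is constant around each vertex and across each
    edge; by connectivity all faces, \<open>f0\<close> included, then lie in \<open>U\<close>.\<close>
  have U_edge: "face_of rot (u, v) \<in> U \<longleftrightarrow> face_of rot (v, u) \<in> U" if "E u v" for u v
    using face_boundary_iff[OF that, of T] face_boundary_iff[OF that, of T'] eq
    by (auto simp: U_def)
  have U_rot: "face_of rot (v, w) \<in> U \<longleftrightarrow> face_of rot (v, rot v w) \<in> U" if "E v w" for v w
    using U_edge[OF that] face_of_reverse[OF edge_sym[OF that]] by simp
  have U_vertex: "face_of rot (v, w) \<in> U \<longleftrightarrow> face_of rot (v, w') \<in> U"
    if "E v w" "E v w'" for v w w'
    using nbr_eq_rot_iterate[OF edge_in_V(1)[OF that(1)] that]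
      U_rot[OF that(1)] U_rot[OF rot_edge[OF edge_in_V(1)[OF that(1)] that(1)]] by auto
  define touches_U where "touches_U v \<longleftrightarrow> (\<exists>w. E v w \<and> face_of rot (v, w) \<in> U)" for v
  have touches_U_step: "touches_U v" if "touches_U u" "E u v" for u v
    using that U_vertex U_edge edge_sym unfolding touches_U_def by metis
  obtain f where "f \<in> U"
    using \<open>T \<noteq> T'\<close> by (auto simp: U_def)
  moreover have "f \<in> faces E rot"
    using \<open>f \<in> U\<close> T T' by (auto simp: U_def)
  ultimately obtain a b where "E a b" "face_of rot (a, b) \<in> U"
    unfolding faces_def darts_def by blast
  then have "touches_U a"
    by (auto simp: touches_U_def)
  have all_touch_U: "touches_U v" if "v \<in> V" for v
  proof -
    have "E\<^sup>*\<^sup>* a v"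
      using connected edge_in_V(1)[OF \<open>E a b\<close>] that unfolding connected_graph_def by blast
    then show ?thesis
      by (induction rule: rtranclp_induct) (use \<open>touches_U a\<close> touches_U_step in blast)+
  qed
  obtain c d where "E c d" "f0 = face_of rot (c, d)"
    using f0 by (auto simp: faces_def darts_def)
  then have "f0 \<in> U"
    using all_touch_U[OF edge_in_V(1)[OF \<open>E c d\<close>]] U_vertex unfolding touches_U_def by blast
  then show False
    using T T' by (auto simp: U_def)
qed

text \<open>By Euler's formula the \<open>2^(F - 1)\<close> distinct face boundaries exhaust the even edge sets.\<close>

theorem even_edge_set_eq_face_boundary:
  assumes "A \<subseteq> edges E" "odd_vertices A = {}"
  shows "\<exists>T. A = face_boundary T"
proof -
  let ?Z = "{A. A \<subseteq> edges E \<and> odd_vertices A = {}}" and ?F = "faces E rot"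
  obtain v where v: "v \<in> V"
    using connected by (auto simp: connected_graph_def)
  then obtain x where "E v x"
    using ex_nbr by blast
  then obtain f0 where f0: "f0 \<in> ?F"
    by (auto simp: faces_def darts_def)
  have "finite ?F"
    using finite_darts by (simp add: faces_def)
  have card_boundaries: "card (face_boundary ` Pow (?F - {f0})) = 2 ^ (card ?F - 1)"
    using card_image[OF face_boundary_inj_on[OF f0]] \<open>finite ?F\<close> f0 by (simp add: card_Pow)
  have sub: "face_boundary ` Pow (?F - {f0}) \<subseteq> ?Z"
    using face_boundary_subset_edges odd_vertices_face_boundary by auto
  have "finite ?Z"
    using finite_edges by (auto intro: finite_subset[of _ "Pow (edges E)"])
  have "card ?Z \<le> 2 ^ (card ?F - 1)"
  proof -
    have "card V \<ge> 1" "card ?F \<ge> 1"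
      using v f0 finite_V \<open>finite ?F\<close> by (auto simp: Suc_le_eq card_gt_0_iff)
    then have "card (edges E) = (card ?F - 1) + (card V - 1)"
      using euler by linarith
    then have "card ?Z * 2 ^ (card V - 1) \<le> 2 ^ (card ?F - 1) * 2 ^ (card V - 1)"
      using card_even_edge_sets by (simp add: power_add)
    then show ?thesis
      by simp
  qed
  then have "face_boundary ` Pow (?F - {f0}) = ?Z"
    using card_seteq[OF \<open>finite ?Z\<close> sub] card_boundaries by simp
  moreover have "A \<in> ?Z"
    using assms by simp
  ultimately show ?thesis
    by (metis imageE)
qed

end

section \<open>Perfect star packings\<close>

locale cubic_star_packing = cubic_sgraph +
  fixes S :: "'a \<Rightarrow> 'a \<Rightarrow> bool"
  assumes packing: "perfect_star_packing V E S"
begin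

abbreviation C :: "'a set" where "C \<equiv> centers V S"

lemma packing_edge: "S u v \<Longrightarrow> E u v"
  using packing by (simp add: perfect_star_packing_def)

lemma symp_S: "symp S"
  using packing by (auto simp: perfect_star_packing_def symp_def)

lemma star_around:
  assumes "v \<in> V"
  obtains c K where "v \<in> K" "c \<in> K" "K \<subseteq> V" "card K = 4" "nbrs S c = K - {c}"
    "\<And>x. x \<in> K \<Longrightarrow> x \<noteq> c \<Longrightarrow> nbrs S x = {c}"
proof -
  define K where "K = {w \<in> V. (restr V S)\<^sup>*\<^sup>* v w}"
  have K: "K \<in> components V S" "v \<in> K"
    using assms by (auto simp: K_def components_def)
  have nbrs_K: "nbrs S x = {y \<in> K. S x y}" if "x \<in> K" for x
  proof -
    have "nbrs S x \<subseteq> V"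
      unfolding nbrs_def using packing_edge edge_in_V(2) by blast
    then show ?thesis
      using nbrs_restr_component[OF symp_S K(1) that] by (auto simp: nbrs_def restr_def)
  qed
  obtain c where "c \<in> K" "card K = 4"
    and star: "\<forall>x\<in>K. \<forall>y\<in>K. S x y \<longleftrightarrow> (x = c \<and> y \<noteq> c) \<or> (y = c \<and> x \<noteq> c)"
    using packing K(1) by (auto simp: perfect_star_packing_def is_K13_def)
  show ?thesis
  proof (rule that[OF K(2) \<open>c \<in> K\<close> _ \<open>card K = 4\<close>])
    show "K \<subseteq> V"
      by (auto simp: K_def)
    show "nbrs S c = K - {c}"
      using nbrs_K[OF \<open>c \<in> K\<close>] star \<open>c \<in> K\<close> by auto
    show "nbrs S x = {c}" if "x \<in> K" "x \<noteq> c" for x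
      using nbrs_K[OF that(1)] star \<open>c \<in> K\<close> that by auto
  qed
qed

lemma centre_nbr:
  assumes "c \<in> C" "E c w" shows "S c w" "w \<notin> C"
proof -
  have c: "c \<in> V" "card (nbrs S c) = 3"
    using assms(1) by (auto simp: centers_def)
  have "nbrs S c \<subseteq> nbrs E c"
    by (auto simp: nbrs_def packing_edge)
  then have "nbrs S c = nbrs E c"
    using card_subset_eq[OF finite_nbrs] c(2) card_nbrs[OF c(1)] by simp
  then show "S c w"
    using assms(2) unfolding nbrs_def by blast
  obtain c0 K where K: "c \<in> K" "c0 \<in> K" "K \<subseteq> V" "card K = 4" "nbrs S c0 = K - {c0}"
    "\<And>x. x \<in> K \<Longrightarrow> x \<noteq> c0 \<Longrightarrow> nbrs S x = {c0}"
    by (rule star_around[OF c(1)]) blast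
  have "c = c0"
  proof (rule ccontr)
    assume "c \<noteq> c0"
    then have "nbrs S c = {c0}"
      using K(1,6) by blast
    with c(2) show False
      by simp
  qed
  have "w \<in> nbrs S c"
    using \<open>S c w\<close> by (simp add: nbrs_def)
  then have "w \<in> K" "w \<noteq> c0"
    using K(5) \<open>c = c0\<close> by auto
  then show "w \<notin> C"
    using K(6) by (simp add: centers_def)
qed

lemma leaf_unique_centre:
  assumes "v \<in> V" "v \<notin> C" shows "\<exists>!c. c \<in> C \<and> E v c"
proof -
  obtain c K where K: "v \<in> K" "c \<in> K" "K \<subseteq> V" "card K = 4" "nbrs S c = K - {c}"
    "\<And>x. x \<in> K \<Longrightarrow> x \<noteq> c \<Longrightarrow> nbrs S x = {c}"
    by (rule star_around[OF assms(1)]) blast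
  have "card (K - {c}) = 3"
    using K(2,4) by (simp add: card_ge_0_finite)
  then have "c \<in> C"
    using K(2,3,5) by (auto simp: centers_def)
  then have "nbrs S v = {c}"
    using K(1,6) assms(2) by blast
  then have "E v c"
    using packing_edge unfolding nbrs_def by blast
  moreover have "c' = c" if "c' \<in> C" "E v c'" for c'
  proof -
    have "S v c'"
      using sympD[OF symp_S centre_nbr(1)[OF that(1) edge_sym[OF that(2)]]] .
    with \<open>nbrs S v = {c}\<close> show ?thesis
      by (auto simp: nbrs_def)
  qed
  ultimately show ?thesis
    using \<open>c \<in> C\<close> by blast
qed

lemma card_leaf_nbrs:
  assumes "v \<in> V - C" shows "card (nbrs E v \<inter> (V - C)) = 2"
proof -
  obtain c where c: "c \<in> C" "E v c" and unique: "\<And>c'. c' \<in> C \<Longrightarrow> E v c' \<Longrightarrow> c' = c"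
    using leaf_unique_centre assms by blast
  have "nbrs E v \<inter> (V - C) = nbrs E v - {c}"
  proof (intro equalityI subsetI)
    fix w assume "w \<in> nbrs E v - {c}"
    then show "w \<in> nbrs E v \<inter> (V - C)"
      using unique[of w] edge_in_V(2)[of v w] by (auto simp: nbrs_def)
  qed (use c(1) in auto)
  moreover have "c \<in> nbrs E v"
    using c(2) by (simp add: nbrs_def)
  ultimately show ?thesis
    using card_nbrs[of v] assms finite_nbrs by (simp add: card_Diff_singleton)
qed

lemma cycle_components:
  assumes "K \<in> components (V - C) E" shows "is_cycle_comp K E"
proof -
  have deg: "card (nbrs (restr K E) v) = 2" if "v \<in> K" for v
  proof -
    have "K \<subseteq> V - C"
      using assms by (auto simp: components_def)
    then show ?thesis
      using nbrs_restr_component[OF symp_E assms that] card_leaf_nbrs that by auto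
  qed
  obtain v where v: "v \<in> K"
    using assms by (auto simp: components_def)
  have "insert v (nbrs (restr K E) v) \<subseteq> K" "v \<notin> nbrs (restr K E) v"
    using v no_loop by (auto simp: nbrs_def restr_def)
  moreover have "finite K"
    using assms finite_V by (auto simp: components_def)
  ultimately have "card K \<ge> 3"
    using deg[OF v] card_mono[of K "insert v (nbrs (restr K E) v)"] finite_subset by fastforce
  then show ?thesis
    using deg by (simp add: is_cycle_comp_def)
qed

end

section \<open>Fullerenes with a perfect star packing\<close>

locale fullerene_star_packing =
  plane_cubic_graph V E rot + cubic_star_packing V E S
  for V :: "'a set" and E rot S +
  assumes pentagons_hexagons: "\<forall>f\<in>faces E rot. penta_hexa_face f"
begin

lemma face_vertex_ne_add_2:
  assumes "d \<in> darts E" shows "face_vertex d i \<noteq> face_vertex d (i + 2)"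
proof -
  let ?f = "face_of rot d" and ?w = "\<lambda>k. (face_step rot ^^ (i + k)) d"
  have "penta_hexa_face ?f"
    using pentagons_hexagons assms by (auto simp: faces_def)
  moreover have "finite ?f"
    using face_of_subset_darts[OF assms] finite_darts by (rule finite_subset)
  ultimately have "inj_on fst ?f" "card ?f \<ge> 5"
    by (auto simp: penta_hexa_face_def inj_on_iff_eq_card)
  moreover have "?w 0 \<noteq> ?w 2"
    using inj_onD[OF face_walk_shifted(2)[OF assms, of i], of 0 2] \<open>card ?f \<ge> 5\<close> by auto
  ultimately have "fst (?w 0) \<noteq> fst (?w 2)"
    using inj_onD[of fst ?f "?w 0" "?w 2"] funpow_in_face_of by blast
  then show ?thesis
    by (simp add: face_vertex_def)
qed

lemma centres_spaced_on_face:
  assumes "d \<in> darts E" "face_vertex d i \<in> C" "face_vertex d j \<in> C" "i < j" "j \<le> i + 2"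
  shows False
proof -
  have "face_vertex d (Suc i) \<notin> C"
    using centre_nbr(2)[OF assms(2) face_vertex_edge[OF assms(1)]] .
  then have "j = i + 2"
    using assms(3-5) by (cases "j = Suc i") auto
  have leaf: "face_vertex d (Suc i) \<in> V"
    using face_vertex_edge[OF assms(1)] by (rule edge_in_V(2))
  have "E (face_vertex d (Suc i)) (face_vertex d i)" "E (face_vertex d (Suc i)) (face_vertex d j)"
    using edge_sym[OF face_vertex_edge[OF assms(1), of i]] face_vertex_edge[OF assms(1), of "Suc i"]
      \<open>j = i + 2\<close> by simp_all
  then have "face_vertex d i = face_vertex d j"
    using leaf_unique_centre[OF leaf \<open>face_vertex d (Suc i) \<notin> C\<close>] assms(2,3) by blast
  then show False
    using face_vertex_ne_add_2[OF assms(1)] \<open>j = i + 2\<close> by simp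
qed

definition cycle_dart :: "'a \<times> 'a \<Rightarrow> bool" where
  "cycle_dart d \<longleftrightarrow> fst d \<notin> C \<and> snd d \<notin> C"

text \<open>A non-centre has exactly two cycle edges. Hence for a cycle dart \<open>d = (u, v)\<close>, the dart
  \<open>face_step rot (prod.swap d) = (u, rot u v)\<close> is a cycle dart iff the cycle does not reach \<open>u\<close>
  along the face of \<open>d\<close>: straight darts are the middle ones of three consecutive cycle darts
  along their face, isolated darts have no cycle dart next to them along their face.\<close>

definition straight_dart :: "'a \<times> 'a \<Rightarrow> bool" where
  "straight_dart d \<longleftrightarrow>
     cycle_dart d \<and> cycle_dart (face_step rot d) \<and> \<not> cycle_dart (face_step rot (prod.swap d))"

definition isolated_dart :: "'a \<times> 'a \<Rightarrow> bool" where
  "isolated_dart d \<longleftrightarrow>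
     cycle_dart d \<and> \<not> cycle_dart (face_step rot d) \<and> cycle_dart (face_step rot (prod.swap d))"

lemma cycle_dart_swap: "cycle_dart (prod.swap d) \<longleftrightarrow> cycle_dart d"
  by (auto simp: cycle_dart_def)

lemma isolated_dart_swap: "isolated_dart (prod.swap d) \<longleftrightarrow> straight_dart d"
  by (auto simp: isolated_dart_def straight_dart_def cycle_dart_swap)

lemma third_nbr_of_leaf:
  assumes "w \<in> V" "w \<notin> C" "E w x"
  shows "rot w (rot w x) \<notin> C \<longleftrightarrow> x \<in> C \<or> rot w x \<in> C"
proof -
  obtain c where c: "c \<in> C" "E w c" and unique: "\<And>c'. c' \<in> C \<Longrightarrow> E w c' \<Longrightarrow> c' = c"
    using leaf_unique_centre[OF assms(1,2)] by blast
  have "E w (rot w x)" "E w (rot w (rot w x))"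
    using rot_edge[OF assms(1)] assms(3) by blast+
  then show ?thesis
    using nbr_eq_rot_iterate[OF assms(1,3) c(2)] rot_three_cycle(2)[OF assms(1,3)] c(1)
      unique[of x] unique[of "rot w x"] unique[of "rot w (rot w x)"] assms(3)
    by auto
qed

lemma cycle_dart_walk: "cycle_dart ((face_step rot ^^ i) d) \<longleftrightarrow>
    face_vertex d i \<notin> C \<and> face_vertex d (Suc i) \<notin> C"
  by (simp add: cycle_dart_def face_walk_dart)

lemma cycle_dart_opposite_walk:
  assumes "d \<in> darts E"
  shows "cycle_dart (face_step rot (prod.swap ((face_step rot ^^ Suc i) d))) \<longleftrightarrow>
    face_vertex d (Suc i) \<notin> C \<and> (face_vertex d i \<in> C \<or> face_vertex d (Suc (Suc i)) \<in> C)"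
proof -
  let ?u = "face_vertex d i" and ?v = "face_vertex d (Suc i)"
  have "face_step rot (prod.swap ((face_step rot ^^ Suc i) d)) = (?v, rot ?v (rot ?v ?u))"
    by (simp add: face_walk_dart face_step_def face_vertex_rot)
  moreover have "E ?v ?u" "?v \<in> V"
    using face_vertex_edge[OF assms, of i] by (simp_all only: edge_sym edge_in_V(2))
  ultimately show ?thesis
    using third_nbr_of_leaf[of ?v ?u] by (auto simp: cycle_dart_def face_vertex_rot)
qed

lemma straight_dart_walk:
  assumes "d \<in> darts E"
  shows "straight_dart ((face_step rot ^^ Suc i) d) \<longleftrightarrow>
    face_vertex d i \<notin> C \<and> face_vertex d (i + 1) \<notin> C \<and> face_vertex d (i + 2) \<notin> C
      \<and> face_vertex d (i + 3) \<notin> C"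
  using cycle_dart_walk[of "Suc i" d] cycle_dart_walk[of "Suc (Suc i)" d]
    cycle_dart_opposite_walk[OF assms, of i]
  by (auto simp: straight_dart_def numeral_eq_Suc)

lemma isolated_dart_walk:
  assumes "d \<in> darts E"
  shows "isolated_dart ((face_step rot ^^ Suc i) d) \<longleftrightarrow>
    face_vertex d i \<in> C \<and> face_vertex d (i + 1) \<notin> C \<and> face_vertex d (i + 2) \<notin> C
      \<and> face_vertex d (i + 3) \<in> C"
  using cycle_dart_walk[of "Suc i" d] cycle_dart_walk[of "Suc (Suc i)" d]
    cycle_dart_opposite_walk[OF assms, of i]
  by (auto simp: isolated_dart_def numeral_eq_Suc)

lemma face_dart_parity:
  assumes "f \<in> faces E rot"
  shows "even (card f + card {d \<in> f. straight_dart d} + card {d \<in> f. isolated_dart d})"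
    "even (card {d \<in> f. isolated_dart d})"
proof -
  obtain d where d: "d \<in> darts E" and f: "f = face_of rot d"
    using assms by (auto simp: faces_def)
  let ?z = "\<lambda>i. face_vertex d i \<in> C"
  have length: "card f = 5 \<or> card f = 6"
    using pentagons_hexagons assms by (auto simp: penta_hexa_face_def)
  have period: "?z (i + card f) = ?z i" for i
    using face_vertex_period[OF d] f by simp
  have spaced: "False" if "?z i" "?z j" "i < j" "j \<le> i + 2" for i j
    using centres_spaced_on_face[OF d that] .
  have straight: "card {d' \<in> f. straight_dart d'} =
      card {i \<in> {..<card f}. \<not> ?z i \<and> \<not> ?z (i + 1) \<and> \<not> ?z (i + 2) \<and> \<not> ?z (i + 3)}"
    using card_face_filter[OF d] straight_dart_walk[OF d] f by simp
  have isolated: "card {d' \<in> f. isolated_dart d'} =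
      card {i \<in> {..<card f}. ?z i \<and> \<not> ?z (i + 1) \<and> \<not> ?z (i + 2) \<and> ?z (i + 3)}"
    using card_face_filter[OF d] isolated_dart_walk[OF d] f by simp
  from cyclic_pattern_parity[of "card f" ?z, OF length period spaced]
  show "even (card f + card {d \<in> f. straight_dart d} + card {d \<in> f. isolated_dart d})"
    "even (card {d \<in> f. isolated_dart d})"
    unfolding straight isolated by simp_all
qed

lemma card_cycle_darts: "card {d \<in> darts E. cycle_dart d} = 2 * card (V - C)"
proof -
  have "{d \<in> darts E. cycle_dart d} = Sigma (V - C) (\<lambda>u. nbrs E u \<inter> (V - C))"
    by (auto simp: darts_def cycle_dart_def nbrs_def dest: edge_in_V)
  then have "card {d \<in> darts E. cycle_dart d} = (\<Sum>u\<in>V - C. card (nbrs E u \<inter> (V - C)))"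
    using finite_V finite_nbrs by (simp add: card_SigmaI)
  then show ?thesis
    using card_leaf_nbrs by simp
qed

definition cycle_edges :: "'a set set" where
  "cycle_edges = {{u, v} | u v. E u v \<and> u \<notin> C \<and> v \<notin> C}"

lemma odd_vertices_cycle_edges: "odd_vertices cycle_edges = {}"
proof -
  have "even (card {e \<in> cycle_edges. v \<in> e})" for v
  proof (cases "v \<in> V - C")
    case True
    have "{e \<in> cycle_edges. v \<in> e} = (\<lambda>w. {v, w}) ` (nbrs E v \<inter> (V - C))"
    proof (intro equalityI subsetI)
      fix e assume "e \<in> {e \<in> cycle_edges. v \<in> e}"
      then obtain a b where "e = {a, b}" "E a b" "a \<notin> C" "b \<notin> C" "v \<in> {a, b}"
        by (auto simp: cycle_edges_def)
      then show "e \<in> (\<lambda>w. {v, w}) ` (nbrs E v \<inter> (V - C))"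
        using edge_sym[of a b] edge_in_V[of a b] by (auto simp: nbrs_def insert_commute)
    qed (use True in \<open>auto simp: cycle_edges_def nbrs_def\<close>)
    moreover have "inj_on (\<lambda>w. {v, w}) (nbrs E v \<inter> (V - C))"
      by (rule inj_onI) (auto simp: doubleton_eq_iff)
    ultimately show ?thesis
      using card_leaf_nbrs[OF True] by (simp add: card_image)
  next
    case False
    then have "{e \<in> cycle_edges. v \<in> e} = {}"
      using edge_in_V by (auto simp: cycle_edges_def)
    then show ?thesis
      by (simp only: card.empty even_zero)
  qed
  then show ?thesis
    by (simp add: odd_vertices_def)
qed

definition cycle_colouring :: "('a \<times> 'a) set set \<Rightarrow> bool" where
  "cycle_colouring T \<longleftrightarrow> (\<forall>u v. E u v \<longrightarrow>
     ((face_of rot (u, v) \<in> T \<longleftrightarrow> face_of rot (v, u) \<notin> T) \<longleftrightarrow> cycle_dart (u, v)))"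

lemma ex_cycle_colouring: "\<exists>T. cycle_colouring T"
proof -
  have "cycle_edges \<subseteq> edges E"
    by (auto simp: cycle_edges_def edges_def)
  then obtain T where T: "cycle_edges = face_boundary T"
    using even_edge_set_eq_face_boundary odd_vertices_cycle_edges by blast
  have "{u, v} \<in> cycle_edges \<longleftrightarrow> cycle_dart (u, v)" if "E u v" for u v
    using that edge_sym[OF that] by (auto simp: cycle_edges_def cycle_dart_def doubleton_eq_iff)
  then have "cycle_colouring T"
    using face_boundary_iff T by (simp add: cycle_colouring_def)
  then show ?thesis ..
qed

lemma swap_darts_on:
  assumes "cycle_colouring T" "d \<in> darts E"
  shows "prod.swap d \<in> darts_on T \<longleftrightarrow> (d \<in> darts_on T \<longleftrightarrow> \<not> cycle_dart d)"
  using assms swap_dart[OF assms(2)]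
  by (cases d) (auto simp: cycle_colouring_def darts_on_def dart_iff)

lemma card_cycle_darts_on:
  assumes "cycle_colouring T"
  shows "card {d \<in> darts_on T. cycle_dart d} = card (V - C)"
proof -
  have "card {d \<in> darts_on T. cycle_dart d} = card {d \<in> darts E - darts_on T. cycle_dart d}"
  proof (rule card_swap_eq)
    fix d assume d: "d \<in> {d \<in> darts_on T. cycle_dart d}"
    then have "d \<in> darts E"
      using darts_on_subset by blast
    then show "prod.swap d \<in> {d \<in> darts E - darts_on T. cycle_dart d}"
      using d swap_darts_on[OF assms] swap_dart by (simp add: cycle_dart_swap)
  next
    fix d assume "d \<in> {d \<in> darts E - darts_on T. cycle_dart d}"
    then show "prod.swap d \<in> {d \<in> darts_on T. cycle_dart d}"
      using swap_darts_on[OF assms, of d] by (simp add: cycle_dart_swap)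
  qed
  then show ?thesis
    using card_darts_on_split[of cycle_dart T] card_cycle_darts by simp
qed

lemma even_card_non_cycle_darts_on:
  assumes "cycle_colouring T"
  shows "even (card {d \<in> darts_on T. \<not> cycle_dart d})"
proof (rule even_card_involution[where g = prod.swap])
  fix d assume d: "d \<in> {d \<in> darts_on T. \<not> cycle_dart d}"
  then have "d \<in> darts E"
    using darts_on_subset by blast
  then show "prod.swap d \<in> {d \<in> darts_on T. \<not> cycle_dart d}"
    using d swap_darts_on[OF assms] by (simp add: cycle_dart_swap)
  show "prod.swap d \<noteq> d"
    using \<open>d \<in> darts E\<close> no_loop by (cases d) (auto simp: dart_iff)
qed simp

lemma card_straight_darts_on:
  assumes "cycle_colouring T"
  shows "card {d \<in> darts_on T. straight_dart d} = card {d \<in> darts E - darts_on T. isolated_dart d}"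
proof (rule card_swap_eq)
  fix d assume d: "d \<in> {d \<in> darts_on T. straight_dart d}"
  then have "d \<in> darts E"
    using darts_on_subset by blast
  then show "prod.swap d \<in> {d \<in> darts E - darts_on T. isolated_dart d}"
    using d swap_darts_on[OF assms] swap_dart by (simp add: isolated_dart_swap straight_dart_def)
next
  fix d assume "d \<in> {d \<in> darts E - darts_on T. isolated_dart d}"
  then show "prod.swap d \<in> {d \<in> darts_on T. straight_dart d}"
    using swap_darts_on[OF assms, of d] isolated_dart_swap[of "prod.swap d"]
    by (simp add: isolated_dart_def)
qed

lemma even_darts_on_faces:
  "even (card (darts_on T) + card {d \<in> darts_on T. straight_dart d}
     + card {d \<in> darts_on T. isolated_dart d})"
proof -
  let ?Q = "T \<inter> faces E rot"
  have "card (darts_on T) + card {d \<in> darts_on T. straight_dart d} + card {d \<in> darts_on T. isolated_dart d}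
      = (\<Sum>f\<in>?Q. card f + card {d \<in> f. straight_dart d} + card {d \<in> f. isolated_dart d})"
    using card_darts_in_faces[of ?Q "\<lambda>_. True"] card_darts_in_faces[of ?Q straight_dart]
      card_darts_in_faces[of ?Q isolated_dart]
    by (simp add: sum.distrib darts_on_Int_faces)
  also have "even \<dots>"
    using face_dart_parity(1) by (auto intro: dvd_sum)
  finally show ?thesis .
qed

lemma even_card_isolated_darts: "even (card {d \<in> darts E. isolated_dart d})"
proof -
  have "card {d \<in> darts E. isolated_dart d} = (\<Sum>f\<in>faces E rot. card {d \<in> f. isolated_dart d})"
    using card_darts_in_faces[of "faces E rot" isolated_dart] by (simp add: darts_on_faces)
  also have "even \<dots>"
    using face_dart_parity(2) by (auto intro: dvd_sum)
  finally show ?thesis .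
qed

lemma even_card_leaves: "even (card (V - C))"
proof -
  obtain T where T: "cycle_colouring T"
    using ex_cycle_colouring by blast
  have "card (darts_on T) = card (V - C) + card {d \<in> darts_on T. \<not> cycle_dart d}"
    using card_filter_split[OF finite_darts_on, of T cycle_dart] card_cycle_darts_on[OF T] by simp
  then have "even (card (darts_on T)) \<longleftrightarrow> even (card (V - C))"
    using even_card_non_cycle_darts_on[OF T] by simp
  moreover have "card (darts_on T) + card {d \<in> darts_on T. straight_dart d}
      + card {d \<in> darts_on T. isolated_dart d} = card (darts_on T) + card {d \<in> darts E. isolated_dart d}"
    using card_straight_darts_on[OF T] card_darts_on_split[of isolated_dart T] by simp
  then have "even (card (darts_on T) + card {d \<in> darts E. isolated_dart d})"
    using even_darts_on_faces[of T] by metis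
  then have "even (card (darts_on T))"
    using even_card_isolated_darts by simp
  ultimately show ?thesis
    by simp
qed

end

theorem mainTheorem11:
  fixes V :: "'a set" and E S :: "'a \<Rightarrow> 'a \<Rightarrow> bool"
  assumes "fullerene V E"
    and "perfect_star_packing V E S"
  shows "even (card {K \<in> components (V - centers V S) E.
                     is_cycle_comp K E \<and> odd (card K)})"
proof -
  obtain rot where "simple_graph V E" "connected_graph V E" "cubic V E" "plane_embedding V E rot"
    "\<forall>f\<in>faces E rot. penta_hexa_face f"
    using assms(1) unfolding fullerene_def by blast
  then interpret fullerene_star_packing V E rot S
    using assms(2) by unfold_locales
  have "{K \<in> components (V - C) E. is_cycle_comp K E \<and> odd (card K)}
      = {K \<in> components (V - C) E. odd (card K)}"
    using cycle_components by blast
  moreover have "finite (V - C)"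
    using finite_V by simp
  ultimately show ?thesis
    using even_card_odd_components[OF _ symp_E even_card_leaves] by simp
qed

end
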